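(* Let $K$ be a fan-like sphere with vertex set $[m]$ and $\Sigma$ a complete fan over $K$ with $m$ 1-cones. Choose a nonzero point $x_i$ on each 1-cone corresponding to $i\in[m]$ and let $\widehat X=(\widehat x_1,\dots,\widehat x_m)$ be a Shephard diagram for $\Sigma$ with respect to $X=(x_1,\dots,x_m)$. Then for any $i\in[m]$, the subsequence $\widehat X\setminus(\widehat x_i)$ is a Shephard diagram for $\operatorname{proj}_i\Sigma$ (with respect to the images in $\mathbb{R}^n/\operatorname{span}\{x_i\}$ of the points $x_j$, $j\ne i$).
   Context: A fan-like sphere is a simplicial $(n-1)$-sphere underlying a complete simplicial fan in $\mathbb{R}^n$. For a vertex $i$, $\operatorname{proj}_i\Sigma$ is the fan in $\mathbb{R}^n/\operatorname{span}\{x_i\}$ formed by the images of the cones of $\Sigma$ containing $x_i$; its underlying complex is $\operatorname{link}_K\{i\}$ (images of $x_j$ with $j$ not in the link may be present as extra points). Linear transform: for a sequence $X=(x_1,\dots,x_m)$ spanning $\mathbb{R}^n$, write a basis of $\{\alpha\in\mathbb{R}^m:\sum\alpha_jx_j=0\}$ as rows of an $(m-n)\times m$ matrix; its columns $\overline x_j$ form a linear transform. If $X$ positively spans $\mathbb{R}^n$, $\operatorname{pos}\overline X$ is strongly convex; choose a hyperplane $H$ not through $0$ meeting each ray $\{a\overline x_j:a>0\}$ at $\widehat x_j$; $(\widehat x_1,\dots,\widehat x_m)$ is a Shephard diagram of $X$ (a Shephard diagram for $\Sigma$ when the $x_j$ lie on the 1-cones of $\Sigma$). *)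

theory Defs
  imports "HOL-Analysis.Analysis"
begin

definition simplicial_complex :: "nat set \<Rightarrow> nat set set \<Rightarrow> bool" where
  "simplicial_complex V K \<longleftrightarrow> finite V \<and> {} \<in> K \<and> (\<forall>\<sigma>\<in>K. \<sigma> \<subseteq> V)
     \<and> (\<forall>\<sigma>\<in>K. \<forall>\<tau>. \<tau> \<subseteq> \<sigma> \<longrightarrow> \<tau> \<in> K) \<and> (\<forall>v\<in>V. {v} \<in> K)"

definition pos_hull :: "(nat \<Rightarrow> 'v::real_vector) \<Rightarrow> nat set \<Rightarrow> 'v set" where
  "pos_hull x S = {\<Sum>j\<in>S. \<mu> j *\<^sub>R x j | \<mu>. \<forall>j\<in>S. \<mu> j \<ge> 0}"

text \<open>The cones pos{x_j : j in sigma}, sigma in K, form a complete simplicial fan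
  in the ambient space; x_j is a nonzero point on the 1-cone of vertex j.\<close>
definition complete_simplicial_fan ::
    "nat set \<Rightarrow> nat set set \<Rightarrow> (nat \<Rightarrow> 'v::euclidean_space) \<Rightarrow> bool" where
  "complete_simplicial_fan V K x \<longleftrightarrow> simplicial_complex V K
     \<and> (\<forall>\<sigma>\<in>K. inj_on x \<sigma> \<and> independent (x ` \<sigma>))
     \<and> (\<forall>\<sigma>\<in>K. \<forall>\<tau>\<in>K. pos_hull x \<sigma> \<inter> pos_hull x \<tau> = pos_hull x (\<sigma> \<inter> \<tau>))
     \<and> (\<Union>\<sigma>\<in>K. pos_hull x \<sigma>) = UNIV"

definition positively_spans :: "nat set \<Rightarrow> (nat \<Rightarrow> 'v::real_vector) \<Rightarrow> bool" where
  "positively_spans I X \<longleftrightarrow> pos_hull X I = UNIV"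

text \<open>Linear transform: the functions j \<mapsto> Xbar j $ k (k ranging over the index type 'd),
  restricted to I, are the rows of a matrix whose rows form a basis of the space of linear
  dependences {alpha. sum_j alpha_j X_j = 0}; the columns Xbar j form the linear transform.\<close>
definition linear_transform ::
    "nat set \<Rightarrow> (nat \<Rightarrow> 'v::real_vector) \<Rightarrow> (nat \<Rightarrow> real^'d) \<Rightarrow> bool" where
  "linear_transform I X Xbar \<longleftrightarrow>
     (\<forall>k. (\<Sum>j\<in>I. (Xbar j $ k) *\<^sub>R X j) = 0)
     \<and> (\<forall>\<alpha>::nat \<Rightarrow> real. (\<Sum>j\<in>I. \<alpha> j *\<^sub>R X j) = 0 \<longrightarrow>
          (\<exists>!c::real^'d. \<forall>j\<in>I. \<alpha> j = (\<Sum>k\<in>UNIV. c $ k * Xbar j $ k)))"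

definition shephard_diagram ::
    "nat set \<Rightarrow> (nat \<Rightarrow> 'v::real_vector) \<Rightarrow> (nat \<Rightarrow> real^'d) \<Rightarrow> bool" where
  "shephard_diagram I X Xhat \<longleftrightarrow> span (X ` I) = UNIV \<and> positively_spans I X \<and>
     (\<exists>Xbar. linear_transform I X Xbar \<and>
        (\<exists>a c. c \<noteq> 0 \<and> (\<forall>j\<in>I. a \<bullet> Xhat j = c \<and> (\<exists>t>0. Xhat j = t *\<^sub>R Xbar j))))"

end

theory Submission
  imports Defs
begin

text \<open>Since the kernel of \<pi> is spanned by x i, a linear dependence among the images
  \<pi>(x j), j \<noteq> i, lifts to a dependence of X by a suitable choice of the i-th
  coefficient, and this choice is unique because x i \<noteq> 0. Hence the dependences of the
  projected configuration are exactly those of X with the i-th coordinate deleted, so deleting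
  the i-th column of a linear transform of X gives a linear transform of the projection, and
  the same hyperplane still cuts out the Shephard diagram. Positive spanning passes to linear
  images, and the image of x i is zero, so it may be dropped; spanning follows from positive
  spanning.\<close>

lemma complete_simplicial_fan_nonzero:
  assumes "complete_simplicial_fan V K x" "v \<in> V"
  shows "x v \<noteq> 0"
proof -
  have "{v} \<in> K"
    using assms unfolding complete_simplicial_fan_def simplicial_complex_def by blast
  then have "independent (x ` {v})"
    using assms(1) unfolding complete_simplicial_fan_def by blast
  then show ?thesis
    using dependent_zero by force
qed

lemma pos_hull_linear_image:
  assumes "linear f"
  shows "pos_hull (\<lambda>j. f (x j)) I = f ` pos_hull x I"
proof -
  have "f (\<Sum>j\<in>I. \<mu> j *\<^sub>R x j) = (\<Sum>j\<in>I. \<mu> j *\<^sub>R f (x j))" for \<mu>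
    by (simp add: linear_sum[OF assms] linear_scale[OF assms])
  then show ?thesis
    unfolding pos_hull_def by (auto simp: image_iff) (metis (lifting))+
qed

lemma pos_hull_remove_zero:
  assumes "finite I" "i \<in> I" "x i = 0"
  shows "pos_hull x (I - {i}) = pos_hull x I"
proof -
  have drop: "(\<Sum>j\<in>I. \<mu> j *\<^sub>R x j) = (\<Sum>j\<in>I - {i}. \<mu> j *\<^sub>R x j)" for \<mu>
    using sum.remove[OF assms(1,2), of "\<lambda>j. \<mu> j *\<^sub>R x j"] assms(3) by simp
  show ?thesis
  proof
    show "pos_hull x (I - {i}) \<subseteq> pos_hull x I"
    proof
      fix v assume "v \<in> pos_hull x (I - {i})"
      then obtain \<mu> where \<mu>: "\<forall>j\<in>I - {i}. \<mu> j \<ge> 0" "v = (\<Sum>j\<in>I - {i}. \<mu> j *\<^sub>R x j)"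
        unfolding pos_hull_def by blast
      define \<nu> where "\<nu> = \<mu>(i := 0)"
      have "v = (\<Sum>j\<in>I - {i}. \<nu> j *\<^sub>R x j)"
        using \<mu>(2) by (simp add: \<nu>_def)
      then have "v = (\<Sum>j\<in>I. \<nu> j *\<^sub>R x j)"
        using drop by simp
      moreover have "\<forall>j\<in>I. \<nu> j \<ge> 0"
        using \<mu>(1) by (simp add: \<nu>_def)
      ultimately show "v \<in> pos_hull x I"
        unfolding pos_hull_def by blast
    qed
    show "pos_hull x I \<subseteq> pos_hull x (I - {i})"
      unfolding pos_hull_def using drop by auto
  qed
qed

lemma pos_hull_subset_span: "pos_hull x I \<subseteq> span (x ` I)"
  unfolding pos_hull_def
  by clarify (intro span_sum span_scale span_base imageI)

lemma positively_spans_imp_span_UNIV: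
  "positively_spans I x \<Longrightarrow> span (x ` I) = UNIV"
  using pos_hull_subset_span unfolding positively_spans_def by blast

lemma positively_spans_linear_image:
  assumes "positively_spans I x" "linear f" "surj f"
  shows "positively_spans I (\<lambda>j. f (x j))"
  using assms by (simp add: positively_spans_def pos_hull_linear_image)

lemma linear_transform_dependence:
  assumes "linear_transform I X Xbar"
  shows "(\<Sum>j\<in>I. (\<Sum>k\<in>UNIV. c $ k * Xbar j $ k) *\<^sub>R X j) = 0"
proof -
  have "(\<Sum>j\<in>I. (\<Sum>k\<in>UNIV. c $ k * Xbar j $ k) *\<^sub>R X j)
      = (\<Sum>k\<in>UNIV. c $ k *\<^sub>R (\<Sum>j\<in>I. (Xbar j $ k) *\<^sub>R X j))"
    by (simp add: scaleR_sum_left scaleR_sum_right sum.swap[where A = I])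
  also have "\<dots> = 0"
    using assms by (simp add: linear_transform_def)
  finally show ?thesis .
qed

lemma linear_transform_coeffs_unique:
  fixes c c' :: "real^'d"
  assumes lt: "linear_transform I X Xbar"
    and eq: "\<forall>j\<in>I. (\<Sum>k\<in>UNIV. c $ k * Xbar j $ k) = (\<Sum>k\<in>UNIV. c' $ k * Xbar j $ k)"
  shows "c = c'"
proof -
  define \<gamma> where "\<gamma> j = (\<Sum>k\<in>UNIV. c $ k * Xbar j $ k)" for j
  have "(\<Sum>j\<in>I. \<gamma> j *\<^sub>R X j) = 0"
    unfolding \<gamma>_def by (rule linear_transform_dependence[OF lt])
  then obtain e :: "real^'d" where
    "\<forall>e'. (\<forall>j\<in>I. \<gamma> j = (\<Sum>k\<in>UNIV. e' $ k * Xbar j $ k)) \<longrightarrow> e' = e"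
    using lt unfolding linear_transform_def by blast
  then show ?thesis
    using eq by (metis \<gamma>_def)
qed

lemma linear_transform_quotient:
  fixes X :: "nat \<Rightarrow> 'v::real_vector" and Xbar :: "nat \<Rightarrow> real^'d"
  assumes lt: "linear_transform I X Xbar"
    and I: "finite I" "i \<in> I" and Xi: "X i \<noteq> 0"
    and f: "linear f" and ker: "\<And>v. f v = 0 \<longleftrightarrow> v \<in> span {X i}"
  shows "linear_transform (I - {i}) (\<lambda>j. f (X j)) Xbar"
proof -
  have split: "(\<Sum>j\<in>I. g j) = g i + (\<Sum>j\<in>I - {i}. g j)" for g :: "nat \<Rightarrow> 'v"
    using sum.remove[OF I] .
  have f_sum: "(\<Sum>j\<in>I - {i}. \<alpha> j *\<^sub>R f (X j)) = f (\<Sum>j\<in>I. \<alpha> j *\<^sub>R X j)" for \<alpha>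
    using ker[of "X i"] split[of "\<lambda>j. \<alpha> j *\<^sub>R X j"]
    by (simp add: span_base linear_add[OF f] linear_sum[OF f] linear_scale[OF f])
  have rows: "(\<Sum>j\<in>I - {i}. (Xbar j $ k) *\<^sub>R f (X j)) = 0" for k
    using lt by (simp add: f_sum linear_transform_def linear_0[OF f])
  have coeffs: "\<exists>!c::real^'d. \<forall>j\<in>I - {i}. \<alpha> j = (\<Sum>k\<in>UNIV. c $ k * Xbar j $ k)"
    if dep: "(\<Sum>j\<in>I - {i}. \<alpha> j *\<^sub>R f (X j)) = 0" for \<alpha>
  proof -
    have "f (\<Sum>j\<in>I - {i}. \<alpha> j *\<^sub>R X j) = 0"
      using dep by (simp add: linear_sum[OF f] linear_scale[OF f])
    then obtain t where t: "(\<Sum>j\<in>I - {i}. \<alpha> j *\<^sub>R X j) = t *\<^sub>R X i"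
      using ker by (auto simp: span_singleton)
    define \<beta> where "\<beta> = \<alpha>(i := - t)"
    have \<beta>_eq: "\<forall>j\<in>I - {i}. \<beta> j = \<alpha> j"
      by (simp add: \<beta>_def)
    have "(\<Sum>j\<in>I - {i}. \<beta> j *\<^sub>R X j) = t *\<^sub>R X i"
      using t \<beta>_eq by (metis (no_types, lifting) sum.cong)
    then have "(\<Sum>j\<in>I. \<beta> j *\<^sub>R X j) = 0"
      using split[of "\<lambda>j. \<beta> j *\<^sub>R X j"] by (simp add: \<beta>_def)
    then obtain c :: "real^'d" where c: "\<forall>j\<in>I. \<beta> j = (\<Sum>k\<in>UNIV. c $ k * Xbar j $ k)"
      using lt unfolding linear_transform_def by blast
    show ?thesis
    proof (rule ex1I)
      show "\<forall>j\<in>I - {i}. \<alpha> j = (\<Sum>k\<in>UNIV. c $ k * Xbar j $ k)"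
        using c \<beta>_eq by simp
    next
      fix c' :: "real^'d"
      assume c': "\<forall>j\<in>I - {i}. \<alpha> j = (\<Sum>k\<in>UNIV. c' $ k * Xbar j $ k)"
      define \<delta> where "\<delta> j = (\<Sum>k\<in>UNIV. c' $ k * Xbar j $ k) - (\<Sum>k\<in>UNIV. c $ k * Xbar j $ k)"
        for j
      have \<delta>_off: "\<forall>j\<in>I - {i}. \<delta> j = 0"
        using c c' \<beta>_eq by (simp add: \<delta>_def)
      have "(\<Sum>j\<in>I. \<delta> j *\<^sub>R X j) = 0"
        using linear_transform_dependence[OF lt, of c'] linear_transform_dependence[OF lt, of c]
        by (simp add: \<delta>_def scaleR_left_diff_distrib sum_subtractf)
      then have "\<delta> i *\<^sub>R X i = 0"
        using split[of "\<lambda>j. \<delta> j *\<^sub>R X j"] \<delta>_off by simp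
      then have "\<forall>j\<in>I. \<delta> j = 0"
        using Xi \<delta>_off by auto
      then show "c' = c"
        by (intro linear_transform_coeffs_unique[OF lt]) (simp add: \<delta>_def)
    qed
  qed
  show ?thesis
    unfolding linear_transform_def using rows coeffs by blast
qed

theorem proposition5p10:
  fixes m :: nat and K :: "nat set set"
    and x :: "nat \<Rightarrow> real^'n"
    and Xhat :: "nat \<Rightarrow> real^'d"
    and i :: nat
    and \<pi> :: "real^'n \<Rightarrow> 'b::euclidean_space"
  assumes fan: "complete_simplicial_fan {1..m} K x"
    and shep: "shephard_diagram {1..m} x Xhat"
    and i: "i \<in> {1..m}"
    and quot: "linear \<pi>" "surj \<pi>" "\<And>v. \<pi> v = 0 \<longleftrightarrow> v \<in> span {x i}"
  shows "shephard_diagram ({1..m} - {i}) (\<lambda>j. \<pi> (x j)) Xhat"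
proof -
  from shep obtain Xbar a c where ps: "positively_spans {1..m} x"
    and lt: "linear_transform {1..m} x Xbar" and c: "c \<noteq> 0"
    and hyp: "\<forall>j\<in>{1..m}. a \<bullet> Xhat j = c \<and> (\<exists>t>0. Xhat j = t *\<^sub>R Xbar j)"
    unfolding shephard_diagram_def by blast
  have "positively_spans {1..m} (\<lambda>j. \<pi> (x j))"
    using positively_spans_linear_image[OF ps quot(1,2)] .
  then have ps': "positively_spans ({1..m} - {i}) (\<lambda>j. \<pi> (x j))"
    using pos_hull_remove_zero[of "{1..m}" i "\<lambda>j. \<pi> (x j)"] i quot(3)[of "x i"]
    by (simp add: positively_spans_def span_base)
  have "linear_transform ({1..m} - {i}) (\<lambda>j. \<pi> (x j)) Xbar"
    using linear_transform_quotient[OF lt _ i complete_simplicial_fan_nonzero[OF fan i] quot(1,3)]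
    by simp
  then show ?thesis
    unfolding shephard_diagram_def
    using positively_spans_imp_span_UNIV[OF ps'] ps' c hyp by blast
qed

end
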